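(* Let $\mathbb{F}$ be a field and $\mathcal{J}Spin_n(\mathbb{F})$ the spin factor with basis $\mathcal{V}=\{\mathbf{1},s_1,\dots,s_n\}$, where $\{s_1,\dots,s_n\}$ is a spin system. For every 1-automorphism $\Phi$ of $\mathcal{J}Spin_n(\mathbb{F})$, the $(n+1)\times(n+1)$ matrix of the linear operator $\Phi$ with respect to $\mathcal{V}$ is symmetric.
   Context: $\mathcal{J}Spin_n(\mathbb{F})$ is the Jordan algebra with basis $\mathbf{1},s_1,\dots,s_n$ and product determined bilinearly by $\mathbf{1}$ being the identity, $s_is_i=\mathbf{1}$ and $s_is_j=0$ for $i\neq j$ (the spin system condition); equivalently $(\alpha\mathbf{1}+x)(\beta\mathbf{1}+y)=(\alpha\beta+f(x,y))\mathbf{1}+\beta x+\alpha y$ with $f(s_i,s_j)=\delta_{ij}$. A symmetry is an element $s$ with $s^2=\mathbf{1}$; for it $U_s(x)=2s(sx)-x$. A 1-automorphism is an automorphism $\Phi$ with $\Phi=U_s$ for some symmetry $s$. The matrix of a linear map $\psi$ with respect to the ordered basis $(v_1,\dots,v_{n+1})$ is $(x_{i,j})$ with $\psi(v_j)=\sum_i x_{i,j}v_i$. *)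

theory Defs
  imports Main
begin

text \<open>Elements of JSpin_n(F) are coordinate vectors v :: nat => 'a with respect to the
 ordered basis (1, s_1, ..., s_n): coordinate 0 is the coefficient of 1, coordinate i
 (1 <= i <= n) that of s_i; all coordinates beyond n are zero.\<close>

definition jspin_carrier :: "nat \<Rightarrow> (nat \<Rightarrow> 'a::field) set" where
  "jspin_carrier n = {v. \<forall>i>n. v i = 0}"

definition jspin_one :: "nat \<Rightarrow> 'a::field" where
  "jspin_one = (\<lambda>i. if i = 0 then 1 else 0)"

definition jspin_basis :: "nat \<Rightarrow> nat \<Rightarrow> 'a::field" where
  "jspin_basis j = (\<lambda>i. if i = j then 1 else 0)"

definition jspin_add :: "(nat \<Rightarrow> 'a::field) \<Rightarrow> (nat \<Rightarrow> 'a) \<Rightarrow> nat \<Rightarrow> 'a" where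
  "jspin_add v w = (\<lambda>i. v i + w i)"

definition jspin_smult :: "'a::field \<Rightarrow> (nat \<Rightarrow> 'a) \<Rightarrow> nat \<Rightarrow> 'a" where
  "jspin_smult c v = (\<lambda>i. c * v i)"

text \<open>(a 1 + x)(b 1 + y) = (a b + f(x,y)) 1 + b x + a y, with f(s_i,s_j) = delta_ij.\<close>
definition jspin_mult :: "nat \<Rightarrow> (nat \<Rightarrow> 'a::field) \<Rightarrow> (nat \<Rightarrow> 'a) \<Rightarrow> nat \<Rightarrow> 'a" where
  "jspin_mult n v w = (\<lambda>i. if i = 0 then v 0 * w 0 + (\<Sum>k=1..n. v k * w k)
                         else if i \<le> n then w 0 * v i + v 0 * w i else 0)"

definition jspin_automorphism :: "nat \<Rightarrow> ((nat \<Rightarrow> 'a::field) \<Rightarrow> nat \<Rightarrow> 'a) \<Rightarrow> bool" where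
  "jspin_automorphism n \<Phi> \<longleftrightarrow>
     bij_betw \<Phi> (jspin_carrier n) (jspin_carrier n) \<and>
     (\<forall>v\<in>jspin_carrier n. \<forall>w\<in>jspin_carrier n. \<Phi> (jspin_add v w) = jspin_add (\<Phi> v) (\<Phi> w)) \<and>
     (\<forall>c. \<forall>v\<in>jspin_carrier n. \<Phi> (jspin_smult c v) = jspin_smult c (\<Phi> v)) \<and>
     (\<forall>v\<in>jspin_carrier n. \<forall>w\<in>jspin_carrier n.
         \<Phi> (jspin_mult n v w) = jspin_mult n (\<Phi> v) (\<Phi> w))"

definition jspin_symmetry :: "nat \<Rightarrow> (nat \<Rightarrow> 'a::field) \<Rightarrow> bool" where
  "jspin_symmetry n s \<longleftrightarrow> s \<in> jspin_carrier n \<and> jspin_mult n s s = jspin_one"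

definition jspin_U :: "nat \<Rightarrow> (nat \<Rightarrow> 'a::field) \<Rightarrow> (nat \<Rightarrow> 'a) \<Rightarrow> nat \<Rightarrow> 'a" where
  "jspin_U n s x = (\<lambda>i. 2 * jspin_mult n s (jspin_mult n s x) i - x i)"

definition jspin_1_automorphism :: "nat \<Rightarrow> ((nat \<Rightarrow> 'a::field) \<Rightarrow> nat \<Rightarrow> 'a) \<Rightarrow> bool" where
  "jspin_1_automorphism n \<Phi> \<longleftrightarrow> jspin_automorphism n \<Phi> \<and>
     (\<exists>s. jspin_symmetry n s \<and> (\<forall>x\<in>jspin_carrier n. \<Phi> x = jspin_U n s x))"

text \<open>Matrix entry x_{i,j} of Phi w.r.t. the basis (1, s_1, ..., s_n), indices 0..n:
  Phi(v_j) = sum_i x_{i,j} v_i.\<close>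
definition jspin_matrix :: "((nat \<Rightarrow> 'a::field) \<Rightarrow> nat \<Rightarrow> 'a) \<Rightarrow> nat \<Rightarrow> nat \<Rightarrow> 'a" where
  "jspin_matrix \<Phi> i j = \<Phi> (jspin_basis j) i"

end

theory Submission
  imports Defs
begin

text \<open>Let \<open>\<langle>x, y\<rangle> = x\<^sub>0 y\<^sub>0 + \<Sum>\<^sub>k x\<^sub>k y\<^sub>k\<close> be the trace form, for which the basis \<open>1, s\<^sub>1, \<dots>, s\<^sub>n\<close>
  is orthonormal. Every multiplication operator \<open>x \<mapsto> s x\<close> is self-adjoint for it, hence
  so is \<open>U\<^sub>s = 2 L\<^sub>s\<^sup>2 - id\<close>, for an arbitrary element \<open>s\<close>. The matrix of a self-adjoint operator
  in an orthonormal basis is symmetric.\<close>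

definition jspin_form :: "nat \<Rightarrow> (nat \<Rightarrow> 'a::field) \<Rightarrow> (nat \<Rightarrow> 'a) \<Rightarrow> 'a" where
  "jspin_form n x y = x 0 * y 0 + (\<Sum>k=1..n. x k * y k)"

lemma jspin_form_commute: "jspin_form n x y = jspin_form n y x"
  by (simp add: jspin_form_def mult.commute)

lemma jspin_form_basis_left:
  assumes "i \<le> n"
  shows "jspin_form n (jspin_basis i) v = v i"
proof -
  have "(\<Sum>k=1..n. jspin_basis i k * v k) = (\<Sum>k=1..n. if i = k then v k else 0)"
    by (rule sum.cong) (auto simp: jspin_basis_def)
  then show ?thesis
    using assms by (cases "i = 0") (simp_all add: jspin_form_def jspin_basis_def)
qed

lemma jspin_form_diff_right:
  "jspin_form n x (\<lambda>i. c * y i - z i) = c * jspin_form n x y - jspin_form n x z"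
  by (simp add: jspin_form_def algebra_simps sum_subtractf sum_distrib_left)

lemma jspin_form_mult_self_adjoint:
  "jspin_form n (jspin_mult n s x) y = jspin_form n x (jspin_mult n s y)"
proof -
  have "jspin_form n (jspin_mult n s x) y =
      s 0 * x 0 * y 0 + y 0 * (\<Sum>k=1..n. s k * x k) + x 0 * (\<Sum>k=1..n. s k * y k)
        + s 0 * (\<Sum>k=1..n. x k * y k)"
    by (simp add: jspin_form_def jspin_mult_def algebra_simps sum.distrib sum_distrib_left)
  also have "\<dots> = jspin_form n x (jspin_mult n s y)"
    by (simp add: jspin_form_def jspin_mult_def algebra_simps sum.distrib sum_distrib_left)
  finally show ?thesis .
qed

lemma jspin_form_U_self_adjoint:
  "jspin_form n (jspin_U n s x) y = jspin_form n x (jspin_U n s y)"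
proof -
  have "jspin_form n (jspin_U n s x) y = jspin_form n y (jspin_U n s x)"
    by (rule jspin_form_commute)
  also have "\<dots> = 2 * jspin_form n y (jspin_mult n s (jspin_mult n s x)) - jspin_form n y x"
    unfolding jspin_U_def by (rule jspin_form_diff_right)
  also have "jspin_form n y (jspin_mult n s (jspin_mult n s x))
      = jspin_form n x (jspin_mult n s (jspin_mult n s y))"
    by (metis jspin_form_commute jspin_form_mult_self_adjoint)
  also have "2 * \<dots> - jspin_form n y x = jspin_form n x (jspin_U n s y)"
    unfolding jspin_U_def jspin_form_diff_right by (simp add: jspin_form_commute)
  finally show ?thesis .
qed

lemma jspin_U_basis_symmetric:
  assumes "i \<le> n" "j \<le> n"
  shows "jspin_U n s (jspin_basis j) i = jspin_U n s (jspin_basis i) j"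
proof -
  have "jspin_U n s (jspin_basis j) i = jspin_form n (jspin_basis i) (jspin_U n s (jspin_basis j))"
    using assms(1) by (simp add: jspin_form_basis_left)
  also have "\<dots> = jspin_form n (jspin_basis j) (jspin_U n s (jspin_basis i))"
    by (metis jspin_form_commute jspin_form_U_self_adjoint)
  also have "\<dots> = jspin_U n s (jspin_basis i) j"
    using assms(2) by (simp add: jspin_form_basis_left)
  finally show ?thesis .
qed

lemma jspin_basis_in_carrier: "j \<le> n \<Longrightarrow> jspin_basis j \<in> jspin_carrier n"
  unfolding jspin_basis_def jspin_carrier_def by auto

theorem theorem4p3:
  fixes n :: nat and \<Phi> :: "(nat \<Rightarrow> 'a::field) \<Rightarrow> nat \<Rightarrow> 'a"
  assumes "jspin_1_automorphism n \<Phi>"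
  shows "\<forall>i\<le>n. \<forall>j\<le>n. jspin_matrix \<Phi> i j = jspin_matrix \<Phi> j i"
proof (intro allI impI)
  fix i j assume "i \<le> n" "j \<le> n"
  from assms obtain s where U: "\<forall>x\<in>jspin_carrier n. \<Phi> x = jspin_U n s x"
    unfolding jspin_1_automorphism_def by blast
  have "jspin_matrix \<Phi> i j = jspin_U n s (jspin_basis j) i"
    using U \<open>j \<le> n\<close> by (simp add: jspin_matrix_def jspin_basis_in_carrier)
  also have "\<dots> = jspin_U n s (jspin_basis i) j"
    using \<open>i \<le> n\<close> \<open>j \<le> n\<close> by (rule jspin_U_basis_symmetric)
  also have "\<dots> = jspin_matrix \<Phi> j i"
    using U \<open>i \<le> n\<close> by (simp add: jspin_matrix_def jspin_basis_in_carrier)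
  finally show "jspin_matrix \<Phi> i j = jspin_matrix \<Phi> j i" .
qed

end
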